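(* Let $(A,\Delta)$ be an algebraic quantum hypergroup with faithful left integral $\varphi$ and antipode $S$ relative to $\varphi$, and define $\psi=\varphi\circ S$. Then $\psi$ is a faithful right integral on $A$, and $$S((\psi\otimes\iota)((b\otimes1)\Delta(a)))=(\psi\otimes\iota)(\Delta(b)(a\otimes1))\qquad\text{for all }a,b\in A.$$
   Context: **Standing definitions.** All algebras are over $\mathbb C$, associative, possibly without identity, with non-degenerate product. $M(A)$ denotes the multiplier algebra and $\iota$ the identity map. *Comultiplication.* A regular comultiplication is a linear map $\Delta:A\to M(A\otimes A)$, not assumed multiplicative, such that: - $\Delta(a)(1\otimes b)$, $(a\otimes1)\Delta(b)$, $\Delta(a)(b\otimes1)$ and $(1\otimes a)\Delta(b)$ lie in $A\otimes A$; - $(a\otimes1\otimes1)(\Delta\otimes\iota)(\Delta(b)(1\otimes c))=(\iota\otimes\Delta)((a\otimes1)\Delta(b))(1\otimes1\otimes c)$. *Counit.* A counit is a homomorphism $\varepsilon$ with $(\varepsilon\otimes\iota)\Delta=\iota=(\iota\otimes\varepsilon)\Delta$. *Integrals.* A left integral is a nonzero $\varphi$ with $(\iota\otimes\varphi)\Delta(a)=\varphi(a)1$ in $M(A)$. A right integral is a nonzero $\psi$ with $(\psi\otimes\iota)\Delta(a)=\psi(a)1$. A functional is faithful if $f(ab)=0\ \forall b$ or $f(ba)=0\ \forall b$ forces $a=0$. *Antipode.* An antipode relative to a faithful left integral $\varphi$ is a bijective linear anti-homomorphism $S$ with $S((\iota\otimes\varphi)(\Delta(a)(1\otimes b)))=(\iota\otimes\varphi)((1\otimes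 a)\Delta(b))$. *Algebraic quantum hypergroup.* A pair $(A,\Delta)$ with a regular comultiplication admitting a counit, a faithful left integral $\varphi$ and an antipode $S$ relative to $\varphi$. *)

theory Defs
  imports Complex_Main
begin

text \<open>
  The algebra A is a type 'a of class ring (associative, distributive,
  no identity required) together with a complex scalar multiplication smul.
  Elements of A (x) A and A (x) A (x) A are represented by finite sums of
  elementary tensors (lists), with equality of tensors given by the relations
  teq2 / teq3 (two sums represent the same tensor iff all slices by linear
  functionals agree).  Multipliers of such an algebra are double centralizers
  (L, R) with x L(y) = R(x) y; m y = L y and x m = R x.
\<close>

type_synonym 'a t2 = "('a \<times> 'a) list"
type_synonym 'a t3 = "('a \<times> 'a \<times> 'a) list"
type_synonym 'r mult = "('r \<Rightarrow> 'r) \<times> ('r \<Rightarrow> 'r)"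

definition calg :: "(complex \<Rightarrow> 'a::ring \<Rightarrow> 'a) \<Rightarrow> bool" where
  "calg smul \<longleftrightarrow>
     (\<forall>c x y. smul c (x + y) = smul c x + smul c y) \<and>
     (\<forall>c d x. smul (c + d) x = smul c x + smul d x) \<and>
     (\<forall>c d x. smul c (smul d x) = smul (c * d) x) \<and>
     (\<forall>x. smul 1 x = x) \<and>
     (\<forall>c x y. smul c (x * y) = smul c x * y \<and> smul c (x * y) = x * smul c y) \<and>
     (\<forall>x::'a. (\<forall>y. x * y = 0) \<longrightarrow> x = 0) \<and>
     (\<forall>x::'a. (\<forall>y. y * x = 0) \<longrightarrow> x = 0)"

definition clin :: "(complex \<Rightarrow> 'a::ring \<Rightarrow> 'a) \<Rightarrow> ('a \<Rightarrow> complex) \<Rightarrow> bool" where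
  "clin smul f \<longleftrightarrow> (\<forall>x y. f (x + y) = f x + f y) \<and> (\<forall>c x. f (smul c x) = c * f x)"

definition lin_map :: "(complex \<Rightarrow> 'a::ring \<Rightarrow> 'a) \<Rightarrow> ('a \<Rightarrow> 'a) \<Rightarrow> bool" where
  "lin_map smul S \<longleftrightarrow> (\<forall>x y. S (x + y) = S x + S y) \<and> (\<forall>c x. S (smul c x) = smul c (S x))"

definition faithful :: "('a::ring \<Rightarrow> complex) \<Rightarrow> bool" where
  "faithful f \<longleftrightarrow> (\<forall>a. (\<forall>b. f (a * b) = 0) \<longrightarrow> a = 0) \<and> (\<forall>a. (\<forall>b. f (b * a) = 0) \<longrightarrow> a = 0)"

definition teq2 :: "(complex \<Rightarrow> 'a::ring \<Rightarrow> 'a) \<Rightarrow> 'a t2 \<Rightarrow> 'a t2 \<Rightarrow> bool" where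
  "teq2 smul xs ys \<longleftrightarrow> (\<forall>f. clin smul f \<longrightarrow>
     sum_list (map (\<lambda>(x, y). smul (f x) y) xs) = sum_list (map (\<lambda>(x, y). smul (f x) y) ys))"

definition teq3 :: "(complex \<Rightarrow> 'a::ring \<Rightarrow> 'a) \<Rightarrow> 'a t3 \<Rightarrow> 'a t3 \<Rightarrow> bool" where
  "teq3 smul xs ys \<longleftrightarrow> (\<forall>f g. clin smul f \<and> clin smul g \<longrightarrow>
     sum_list (map (\<lambda>(x, y, z). smul (f x * g y) z) xs) =
     sum_list (map (\<lambda>(x, y, z). smul (f x * g y) z) ys))"

definition tmul2 :: "'a::ring t2 \<Rightarrow> 'a t2 \<Rightarrow> 'a t2" where
  "tmul2 xs ys = concat (map (\<lambda>(x1, x2). map (\<lambda>(y1, y2). (x1 * y1, x2 * y2)) ys) xs)"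

definition tmul3 :: "'a::ring t3 \<Rightarrow> 'a t3 \<Rightarrow> 'a t3" where
  "tmul3 xs ys = concat (map (\<lambda>(x1, x2, x3). map (\<lambda>(y1, y2, y3). (x1 * y1, x2 * y2, x3 * y3)) ys) xs)"

definition is_mult :: "('r \<Rightarrow> 'r \<Rightarrow> bool) \<Rightarrow> ('r \<Rightarrow> 'r \<Rightarrow> 'r) \<Rightarrow> 'r mult \<Rightarrow> bool" where
  "is_mult eq mul m \<longleftrightarrow>
     (\<forall>x y. eq x y \<longrightarrow> eq (fst m x) (fst m y) \<and> eq (snd m x) (snd m y)) \<and>
     (\<forall>x y. eq (mul x (fst m y)) (mul (snd m x) y))"

definition meq :: "('r \<Rightarrow> 'r \<Rightarrow> bool) \<Rightarrow> 'r mult \<Rightarrow> 'r mult \<Rightarrow> bool" where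
  "meq eq m1 m2 \<longleftrightarrow> (\<forall>y. eq (fst m1 y) (fst m2 y)) \<and> (\<forall>x. eq (snd m1 x) (snd m2 x))"

definition memb :: "('r \<Rightarrow> 'r \<Rightarrow> 'r) \<Rightarrow> 'r \<Rightarrow> 'r mult" where
  "memb mul t = ((\<lambda>y. mul t y), (\<lambda>x. mul x t))"

definition mmul :: "'r mult \<Rightarrow> 'r mult \<Rightarrow> 'r mult" where
  "mmul m1 m2 = (fst m1 \<circ> fst m2, snd m2 \<circ> snd m1)"

definition inM :: "('r \<Rightarrow> 'r \<Rightarrow> bool) \<Rightarrow> ('r \<Rightarrow> 'r \<Rightarrow> 'r) \<Rightarrow> 'r mult \<Rightarrow> 'r \<Rightarrow> bool" where
  "inM eq mul m t \<longleftrightarrow> meq eq m (memb mul t)"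

abbreviation inAA :: "(complex \<Rightarrow> 'a::ring \<Rightarrow> 'a) \<Rightarrow> 'a t2 mult \<Rightarrow> 'a t2 \<Rightarrow> bool" where
  "inAA smul m t \<equiv> inM (teq2 smul) tmul2 m t"

definition madd :: "('b list) mult \<Rightarrow> ('b list) mult \<Rightarrow> ('b list) mult" where
  "madd m1 m2 = ((\<lambda>y. fst m1 y @ fst m2 y), (\<lambda>x. snd m1 x @ snd m2 x))"

definition msc2 :: "(complex \<Rightarrow> 'a::ring \<Rightarrow> 'a) \<Rightarrow> complex \<Rightarrow> 'a t2 mult \<Rightarrow> 'a t2 mult" where
  "msc2 smul c m = ((\<lambda>y. map (\<lambda>(u, v). (smul c u, v)) (fst m y)),
                    (\<lambda>x. map (\<lambda>(u, v). (smul c u, v)) (snd m x)))"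

text \<open>a (x) 1 and 1 (x) a in M(A (x) A); a (x) 1 (x) 1 and 1 (x) 1 (x) a in M(A (x) A (x) A)\<close>
definition lone :: "'a::ring \<Rightarrow> 'a t2 mult" where
  "lone a = (map (\<lambda>(x, y). (a * x, y)), map (\<lambda>(x, y). (x * a, y)))"
definition rone :: "'a::ring \<Rightarrow> 'a t2 mult" where
  "rone a = (map (\<lambda>(x, y). (x, a * y)), map (\<lambda>(x, y). (x, y * a)))"
definition lone3 :: "'a::ring \<Rightarrow> 'a t3 mult" where
  "lone3 a = (map (\<lambda>(x, y, z). (a * x, y, z)), map (\<lambda>(x, y, z). (x * a, y, z)))"
definition rone3 :: "'a::ring \<Rightarrow> 'a t3 mult" where
  "rone3 a = (map (\<lambda>(x, y, z). (x, y, a * z)), map (\<lambda>(x, y, z). (x, y, z * a)))"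

text \<open>(Delta (x) iota)(t) and (iota (x) Delta)(t) in M(A (x) A (x) A), for t in A (x) A\<close>
definition delta_id :: "('a::ring \<Rightarrow> 'a t2 mult) \<Rightarrow> 'a t2 \<Rightarrow> 'a t3 mult" where
  "delta_id Delta t =
    ((\<lambda>w. concat (map (\<lambda>(p, q). concat (map (\<lambda>(x, y, z).
          map (\<lambda>(u, v). (u, v, q * z)) (fst (Delta p) [(x, y)])) w)) t)),
     (\<lambda>w. concat (map (\<lambda>(p, q). concat (map (\<lambda>(x, y, z).
          map (\<lambda>(u, v). (u, v, z * q)) (snd (Delta p) [(x, y)])) w)) t)))"

definition id_delta :: "('a::ring \<Rightarrow> 'a t2 mult) \<Rightarrow> 'a t2 \<Rightarrow> 'a t3 mult" where
  "id_delta Delta t =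
    ((\<lambda>w. concat (map (\<lambda>(r, s). concat (map (\<lambda>(x, y, z).
          map (\<lambda>(u, v). (r * x, u, v)) (fst (Delta s) [(y, z)])) w)) t)),
     (\<lambda>w. concat (map (\<lambda>(r, s). concat (map (\<lambda>(x, y, z).
          map (\<lambda>(u, v). (x * r, u, v)) (snd (Delta s) [(y, z)])) w)) t)))"

text \<open>slice maps: (iota (x) f) and (f (x) iota)\<close>
definition slice2 :: "(complex \<Rightarrow> 'a::ring \<Rightarrow> 'a) \<Rightarrow> ('a \<Rightarrow> complex) \<Rightarrow> 'a t2 \<Rightarrow> 'a" where
  "slice2 smul f t = sum_list (map (\<lambda>(x, y). smul (f y) x) t)"
definition slice1 :: "(complex \<Rightarrow> 'a::ring \<Rightarrow> 'a) \<Rightarrow> ('a \<Rightarrow> complex) \<Rightarrow> 'a t2 \<Rightarrow> 'a" where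
  "slice1 smul f t = sum_list (map (\<lambda>(x, y). smul (f x) y) t)"

definition regular_comult :: "(complex \<Rightarrow> 'a::ring \<Rightarrow> 'a) \<Rightarrow> ('a \<Rightarrow> 'a t2 mult) \<Rightarrow> bool" where
  "regular_comult smul Delta \<longleftrightarrow>
     (\<forall>a. is_mult (teq2 smul) tmul2 (Delta a)) \<and>
     (\<forall>a b. meq (teq2 smul) (Delta (a + b)) (madd (Delta a) (Delta b))) \<and>
     (\<forall>c a. meq (teq2 smul) (Delta (smul c a)) (msc2 smul c (Delta a))) \<and>
     (\<forall>a b. \<exists>t. inAA smul (mmul (Delta a) (rone b)) t) \<and>
     (\<forall>a b. \<exists>t. inAA smul (mmul (lone a) (Delta b)) t) \<and>
     (\<forall>a b. \<exists>t. inAA smul (mmul (Delta a) (lone b)) t) \<and>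
     (\<forall>a b. \<exists>t. inAA smul (mmul (rone a) (Delta b)) t) \<and>
     (\<forall>a b c t1 t2. inAA smul (mmul (Delta b) (rone c)) t1 \<and> inAA smul (mmul (lone a) (Delta b)) t2 \<longrightarrow>
        meq (teq3 smul) (mmul (lone3 a) (delta_id Delta t1)) (mmul (id_delta Delta t2) (rone3 c)))"

definition counit :: "(complex \<Rightarrow> 'a::ring \<Rightarrow> 'a) \<Rightarrow> ('a \<Rightarrow> 'a t2 mult) \<Rightarrow> ('a \<Rightarrow> complex) \<Rightarrow> bool" where
  "counit smul Delta eps \<longleftrightarrow> clin smul eps \<and> (\<forall>x y. eps (x * y) = eps x * eps y) \<and>
     (\<forall>a b t. inAA smul (mmul (Delta a) (rone b)) t \<longrightarrow> slice1 smul eps t = a * b) \<and>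
     (\<forall>a b t. inAA smul (mmul (rone b) (Delta a)) t \<longrightarrow> slice1 smul eps t = b * a) \<and>
     (\<forall>a b t. inAA smul (mmul (Delta a) (lone b)) t \<longrightarrow> slice2 smul eps t = a * b) \<and>
     (\<forall>a b t. inAA smul (mmul (lone b) (Delta a)) t \<longrightarrow> slice2 smul eps t = b * a)"

definition left_integral :: "(complex \<Rightarrow> 'a::ring \<Rightarrow> 'a) \<Rightarrow> ('a \<Rightarrow> 'a t2 mult) \<Rightarrow> ('a \<Rightarrow> complex) \<Rightarrow> bool" where
  "left_integral smul Delta phi \<longleftrightarrow> clin smul phi \<and> phi \<noteq> (\<lambda>_. 0) \<and>
     (\<forall>a c t. inAA smul (mmul (Delta a) (lone c)) t \<longrightarrow> slice2 smul phi t = smul (phi a) c) \<and>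
     (\<forall>a c t. inAA smul (mmul (lone c) (Delta a)) t \<longrightarrow> slice2 smul phi t = smul (phi a) c)"

definition right_integral :: "(complex \<Rightarrow> 'a::ring \<Rightarrow> 'a) \<Rightarrow> ('a \<Rightarrow> 'a t2 mult) \<Rightarrow> ('a \<Rightarrow> complex) \<Rightarrow> bool" where
  "right_integral smul Delta psi \<longleftrightarrow> clin smul psi \<and> psi \<noteq> (\<lambda>_. 0) \<and>
     (\<forall>a c t. inAA smul (mmul (Delta a) (rone c)) t \<longrightarrow> slice1 smul psi t = smul (psi a) c) \<and>
     (\<forall>a c t. inAA smul (mmul (rone c) (Delta a)) t \<longrightarrow> slice1 smul psi t = smul (psi a) c)"

definition antipode :: "(complex \<Rightarrow> 'a::ring \<Rightarrow> 'a) \<Rightarrow> ('a \<Rightarrow> 'a t2 mult) \<Rightarrow> ('a \<Rightarrow> complex) \<Rightarrow> ('a \<Rightarrow> 'a) \<Rightarrow> bool" where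
  "antipode smul Delta phi S \<longleftrightarrow> lin_map smul S \<and> bij S \<and> (\<forall>x y. S (x * y) = S y * S x) \<and>
     (\<forall>a b t u. inAA smul (mmul (Delta a) (rone b)) t \<and> inAA smul (mmul (rone a) (Delta b)) u \<longrightarrow>
        S (slice2 smul phi t) = slice2 smul phi u)"

definition alg_quantum_hypergroup ::
  "(complex \<Rightarrow> 'a::ring \<Rightarrow> 'a) \<Rightarrow> ('a \<Rightarrow> 'a t2 mult) \<Rightarrow> ('a \<Rightarrow> complex) \<Rightarrow> ('a \<Rightarrow> 'a) \<Rightarrow> bool" where
  "alg_quantum_hypergroup smul Delta phi S \<longleftrightarrow>
     calg smul \<and> regular_comult smul Delta \<and> (\<exists>eps. counit smul Delta eps) \<and>
     left_integral smul Delta phi \<and> faithful phi \<and> antipode smul Delta phi S"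

end

theory Submission
  imports Defs
begin

text \<open>
  Everything rests on the antipode reversing the comultiplication,
  \<open>(S \<otimes> S)(flip ((g \<otimes> 1)\<Delta>(c))) = \<Delta>(S c)(1 \<otimes> S g)\<close>.  Both sides are linear in \<open>c\<close>, and the
  elements \<open>(\<iota> \<otimes> \<phi>)(\<Delta>(a)(1 \<otimes> b))\<close> span \<open>A\<close> (by the counit and faithfulness of \<open>\<phi>\<close>), so it
  suffices to take \<open>c\<close> of that form; there coassociativity, applied twice, lets the defining
  relation \<open>S((\<iota> \<otimes> \<phi>)(\<Delta>(a)(1 \<otimes> b))) = (\<iota> \<otimes> \<phi>)((1 \<otimes> a)\<Delta>(b))\<close> carry \<open>S\<close> across.  Through this
  identity left invariance of \<open>\<phi>\<close> becomes right invariance of \<open>\<psi> = \<phi> \<circ> S\<close>, and both sides of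
  the stated formula reduce to \<open>(\<iota> \<otimes> \<phi>)(\<Delta>(S a)(1 \<otimes> S b))\<close>.

  Tensors are lists of elementary tensors and are compared through their values on \<open>f \<otimes> g\<close> for
  linear functionals \<open>f, g\<close>.  Non-degeneracy of the product and faithfulness of \<open>\<phi>\<close> make these
  values determine a tensor \<open>X\<close> already from the products \<open>X(w\<^sub>1 \<otimes> w\<^sub>2)\<close>, which reduces every
  identity between multipliers to an identity between the elements \<open>\<Delta>(a)(w\<^sub>1 \<otimes> w\<^sub>2)\<close>.
\<close>

section \<open>Tensors as lists of elementary tensors\<close>

definition tensor_eval :: "'a t2 \<Rightarrow> ('a \<Rightarrow> complex) \<Rightarrow> ('a \<Rightarrow> complex) \<Rightarrow> complex" where
  "tensor_eval t f g = sum_list (map (\<lambda>(x, y). f x * g y) t)"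

lemma tensor_eval_simps [simp]:
  "tensor_eval [] f g = 0"
  "tensor_eval ((x, y) # t) f g = f x * g y + tensor_eval t f g"
  "tensor_eval (t @ u) f g = tensor_eval t f g + tensor_eval u f g"
  by (auto simp: tensor_eval_def)

lemma tensor_eval_add_right:
  "tensor_eval t f (\<lambda>y. g y + g' y) = tensor_eval t f g + tensor_eval t f g'"
  by (induction t) (auto simp: algebra_simps)

lemma tensor_eval_scale_right: "tensor_eval t f (\<lambda>y. c * g y) = c * tensor_eval t f g"
  by (induction t) (auto simp: algebra_simps)

definition lmul1 :: "'a::ring \<Rightarrow> 'a t2 \<Rightarrow> 'a t2" where
  "lmul1 g t = map (\<lambda>(x, y). (g * x, y)) t"
definition lmul2 :: "'a::ring \<Rightarrow> 'a t2 \<Rightarrow> 'a t2" where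
  "lmul2 g t = map (\<lambda>(x, y). (x, g * y)) t"
definition rmul1 :: "'a::ring \<Rightarrow> 'a t2 \<Rightarrow> 'a t2" where
  "rmul1 g t = map (\<lambda>(x, y). (x * g, y)) t"
definition rmul2 :: "'a::ring \<Rightarrow> 'a t2 \<Rightarrow> 'a t2" where
  "rmul2 g t = map (\<lambda>(x, y). (x, y * g)) t"
definition rmul_both :: "'a::ring \<Rightarrow> 'a \<Rightarrow> 'a t2 \<Rightarrow> 'a t2" where
  "rmul_both w1 w2 t = map (\<lambda>(x, y). (x * w1, y * w2)) t"
definition flip_map :: "('a \<Rightarrow> 'a) \<Rightarrow> 'a t2 \<Rightarrow> 'a t2" where
  "flip_map S t = map (\<lambda>(x, y). (S y, S x)) t"

lemma tensor_eval_lmul1 [simp]: "tensor_eval (lmul1 w t) f g = tensor_eval t (\<lambda>x. f (w * x)) g"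
  by (induction t) (auto simp: lmul1_def)
lemma tensor_eval_lmul2 [simp]: "tensor_eval (lmul2 w t) f g = tensor_eval t f (\<lambda>y. g (w * y))"
  by (induction t) (auto simp: lmul2_def)
lemma tensor_eval_rmul1 [simp]: "tensor_eval (rmul1 w t) f g = tensor_eval t (\<lambda>x. f (x * w)) g"
  by (induction t) (auto simp: rmul1_def)
lemma tensor_eval_rmul2 [simp]: "tensor_eval (rmul2 w t) f g = tensor_eval t f (\<lambda>y. g (y * w))"
  by (induction t) (auto simp: rmul2_def)
lemma tensor_eval_rmul_both [simp]:
  "tensor_eval (rmul_both w1 w2 t) f g = tensor_eval t (\<lambda>x. f (x * w1)) (\<lambda>y. g (y * w2))"
  by (induction t) (auto simp: rmul_both_def)
lemma tensor_eval_flip_map [simp]: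
  "tensor_eval (flip_map S t) f g = tensor_eval t (\<lambda>x. g (S x)) (\<lambda>y. f (S y))"
  by (induction t) (auto simp: flip_map_def mult.commute)

lemma tmul2_single [simp]: "tmul2 t [(w1, w2)] = rmul_both w1 w2 t"
  by (induction t) (auto simp: tmul2_def rmul_both_def)

lemma rmul_both_append [simp]: "rmul_both w1 w2 (X @ Y) = rmul_both w1 w2 X @ rmul_both w1 w2 Y"
  by (simp add: rmul_both_def)
lemma rmul_both_lmul1 [simp]: "rmul_both w1 w2 (lmul1 g X) = lmul1 g (rmul_both w1 w2 X)"
  by (induction X) (auto simp: rmul_both_def lmul1_def mult.assoc)
lemma rmul_both_lmul2 [simp]: "rmul_both w1 w2 (lmul2 g X) = lmul2 g (rmul_both w1 w2 X)"
  by (induction X) (auto simp: rmul_both_def lmul2_def mult.assoc)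
lemma rmul_both_rmul1 [simp]: "rmul_both w1 w2 (rmul1 g X) = rmul_both (g * w1) w2 X"
  by (induction X) (auto simp: rmul_both_def rmul1_def mult.assoc)
lemma rmul_both_rmul2 [simp]: "rmul_both w1 w2 (rmul2 g X) = rmul_both w1 (g * w2) X"
  by (induction X) (auto simp: rmul_both_def rmul2_def mult.assoc)
lemma rmul_both_eq_rmul1_rmul2: "rmul_both w1 w2 X = rmul1 w1 (rmul2 w2 X)"
  by (induction X) (auto simp: rmul_both_def rmul1_def rmul2_def)
lemma lmul1_lmul2_commute: "lmul1 g (lmul2 h X) = lmul2 h (lmul1 g X)"
  by (induction X) (auto simp: lmul1_def lmul2_def)

definition tensor3_eval ::
  "'a t3 \<Rightarrow> ('a \<Rightarrow> complex) \<Rightarrow> ('a \<Rightarrow> complex) \<Rightarrow> ('a \<Rightarrow> complex) \<Rightarrow> complex" where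
  "tensor3_eval L f1 f2 f3 = sum_list (map (\<lambda>(x, y, z). f1 x * f2 y * f3 z) L)"

lemma tensor3_eval_simps [simp]:
  "tensor3_eval [] f1 f2 f3 = 0"
  "tensor3_eval ((x, y, z) # L) f1 f2 f3 = f1 x * f2 y * f3 z + tensor3_eval L f1 f2 f3"
  "tensor3_eval (L @ M) f1 f2 f3 = tensor3_eval L f1 f2 f3 + tensor3_eval M f1 f2 f3"
  by (auto simp: tensor3_eval_def)

lemma tensor3_eval_lmul1:
  "tensor3_eval (map (\<lambda>(x, yz). (g * x, yz)) L) f1 f2 f3 = tensor3_eval L (\<lambda>x. f1 (g * x)) f2 f3"
  by (induction L) (auto simp: tensor3_eval_def)
lemma tensor3_eval_extend_right:
  "tensor3_eval (map (\<lambda>(u, v). (u, v, c)) L) f1 f2 f3 = tensor_eval L f1 f2 * f3 c"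
  by (induction L) (auto simp: algebra_simps)
lemma tensor3_eval_extend_left:
  "tensor3_eval (map (Pair c) L) f1 f2 f3 = f1 c * tensor_eval L f2 f3"
  by (induction L) (auto simp: algebra_simps)

definition rotate3 :: "'a t3 \<Rightarrow> 'a t3" where
  "rotate3 L = map (\<lambda>(x, y, z). (y, z, x)) L"

lemma tensor3_eval_rotate3: "tensor3_eval (rotate3 L) f2 f3 f1 = tensor3_eval L f1 f2 f3"
  by (induction L) (auto simp: rotate3_def algebra_simps)

text \<open>\<open>nest_left t F\<close> is \<open>(F \<otimes> \<iota>) t\<close> and \<open>nest_right t F\<close> is \<open>(\<iota> \<otimes> F) t\<close>.\<close>

definition nest_left :: "'a t2 \<Rightarrow> ('a \<Rightarrow> 'a t2) \<Rightarrow> 'a t3" where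
  "nest_left t F = concat (map (\<lambda>(p, q). map (\<lambda>(u, v). (u, v, q)) (F p)) t)"
definition nest_right :: "'a t2 \<Rightarrow> ('a \<Rightarrow> 'a t2) \<Rightarrow> 'a t3" where
  "nest_right t F = concat (map (\<lambda>(r, s). map (\<lambda>(u, v). (r, u, v)) (F s)) t)"

lemma tensor3_eval_nest_left [simp]:
  "tensor3_eval (nest_left t F) f1 f2 f3 = tensor_eval t (\<lambda>p. tensor_eval (F p) f1 f2) f3"
  by (induction t) (auto simp: nest_left_def tensor3_eval_extend_right)
lemma tensor3_eval_nest_right [simp]:
  "tensor3_eval (nest_right t F) f1 f2 f3 = tensor_eval t f1 (\<lambda>s. tensor_eval (F s) f2 f3)"
  by (induction t) (auto simp: nest_right_def tensor3_eval_extend_left)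

section \<open>Complex algebras and their linear functionals\<close>

locale complex_algebra =
  fixes smul :: "complex \<Rightarrow> 'a::ring \<Rightarrow> 'a"
  assumes calg: "calg smul"
begin

lemma smul_add_left: "smul (c + d) x = smul c x + smul d x"
  using calg by (simp add: calg_def)
lemma smul_mult_left: "smul c (x * y) = smul c x * y"
  using calg unfolding calg_def by blast
lemma smul_mult_right: "smul c (x * y) = x * smul c y"
  using calg unfolding calg_def by blast

lemma smul_zero_left [simp]: "smul 0 x = 0"
  using smul_add_left[of 0 0 x] by simp

lemma mult_right_nondegenerate: "\<forall>x::'a. (\<forall>y. x * y = 0) \<longrightarrow> x = 0"
  using calg unfolding calg_def by (elim conjE) assumption
lemma mult_left_nondegenerate: "\<forall>x::'a. (\<forall>y. y * x = 0) \<longrightarrow> x = 0"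
  using calg unfolding calg_def by (elim conjE) assumption

lemma eq_if_mult_right_eq: assumes "\<And>w. P * w = Q * w" shows "P = (Q::'a)"
proof -
  have "\<forall>w. (P - Q) * w = 0" using assms by (simp add: left_diff_distrib)
  then show ?thesis using mult_right_nondegenerate by auto
qed

lemma eq_if_mult_left_eq: assumes "\<And>w. w * P = w * Q" shows "P = (Q::'a)"
proof -
  have "\<forall>w. w * (P - Q) = 0" using assms by (simp add: right_diff_distrib)
  then show ?thesis using mult_left_nondegenerate by auto
qed

lemma clin_add: "clin smul f \<Longrightarrow> f (x + y) = f x + f y"
  by (simp add: clin_def)
lemma clin_smul: "clin smul f \<Longrightarrow> f (smul c x) = c * f x"
  by (simp add: clin_def)
lemma clin_zero: "clin smul f \<Longrightarrow> f 0 = 0"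
  using clin_add[of f 0 0] by simp
lemma clin_diff: assumes "clin smul f" shows "f (x - y) = f x - f y"
proof -
  have "f (x - y) + f y = f x" using clin_add[OF assms, of "x - y" y] by simp
  then show ?thesis by (simp add: eq_diff_eq)
qed

lemma clin_mult_left: "clin smul f \<Longrightarrow> clin smul (\<lambda>x. f (g * x))"
  by (auto simp: clin_def distrib_left smul_mult_right[symmetric])
lemma clin_mult_right: "clin smul f \<Longrightarrow> clin smul (\<lambda>x. f (x * g))"
  by (auto simp: clin_def distrib_right smul_mult_left[symmetric])
lemma clin_diff_fun: "clin smul f \<Longrightarrow> clin smul g \<Longrightarrow> clin smul (\<lambda>x. f x - g x)"
  by (simp add: clin_def algebra_simps)

lemma clin_slice1: "clin smul g \<Longrightarrow> g (slice1 smul f t) = tensor_eval t f g"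
  by (induction t) (auto simp: slice1_def clin_zero clin_add clin_smul)
lemma clin_slice2: "clin smul f \<Longrightarrow> f (slice2 smul g t) = tensor_eval t f g"
  by (induction t) (auto simp: slice2_def clin_zero clin_add clin_smul mult.commute)
lemma clin_slice3:
  "clin smul h \<Longrightarrow> h (sum_list (map (\<lambda>(x, y, z). smul (f1 x * f2 y) z) L)) = tensor3_eval L f1 f2 h"
  by (induction L) (auto simp: clin_zero clin_add clin_smul)

definition tensor_scale :: "complex \<Rightarrow> 'a t2 \<Rightarrow> 'a t2" where
  "tensor_scale c t = map (\<lambda>(x, y). (smul c x, y)) t"

lemma tensor_eval_tensor_scale: "clin smul f \<Longrightarrow> tensor_eval (tensor_scale c t) f g = c * tensor_eval t f g"
  by (induction t) (auto simp: tensor_scale_def clin_smul algebra_simps)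
lemma rmul_both_tensor_scale [simp]:
  "rmul_both w1 w2 (tensor_scale c X) = tensor_scale c (rmul_both w1 w2 X)"
  by (induction X) (auto simp: rmul_both_def tensor_scale_def smul_mult_left)

text \<open>In a faithful algebra this is equivalent to \<open>teq2\<close>; being symmetric in the two legs, it is
  preserved by multiplications on either leg.\<close>

definition tensor_eq :: "'a t2 \<Rightarrow> 'a t2 \<Rightarrow> bool" where
  "tensor_eq X Y \<longleftrightarrow> (\<forall>f g. clin smul f \<longrightarrow> clin smul g \<longrightarrow> tensor_eval X f g = tensor_eval Y f g)"

lemma tensor_eqD: "tensor_eq X Y \<Longrightarrow> clin smul f \<Longrightarrow> clin smul g \<Longrightarrow> tensor_eval X f g = tensor_eval Y f g"
  by (simp add: tensor_eq_def)
lemma tensor_eq_sym: "tensor_eq X Y \<Longrightarrow> tensor_eq Y X"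
  by (simp add: tensor_eq_def)
lemma tensor_eq_trans [trans]: "tensor_eq X Y \<Longrightarrow> tensor_eq Y Z \<Longrightarrow> tensor_eq X Z"
  by (simp add: tensor_eq_def)
lemma teq2_imp_tensor_eq: assumes "teq2 smul X Y" shows "tensor_eq X Y"
  unfolding tensor_eq_def
proof (intro allI impI)
  fix f g assume f: "clin smul f" and g: "clin smul g"
  have "slice1 smul f X = slice1 smul f Y" using assms f unfolding teq2_def slice1_def by blast
  then show "tensor_eval X f g = tensor_eval Y f g" by (simp add: clin_slice1[OF g, symmetric])
qed

lemma tensor_eq_lmul1: "tensor_eq X Y \<Longrightarrow> tensor_eq (lmul1 g X) (lmul1 g Y)"
  by (simp add: tensor_eq_def clin_mult_left)
lemma tensor_eq_lmul2: "tensor_eq X Y \<Longrightarrow> tensor_eq (lmul2 g X) (lmul2 g Y)"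
  by (simp add: tensor_eq_def clin_mult_left)
lemma tensor_eq_rmul1: "tensor_eq X Y \<Longrightarrow> tensor_eq (rmul1 g X) (rmul1 g Y)"
  by (simp add: tensor_eq_def clin_mult_right)

end

locale faithful_algebra = complex_algebra +
  fixes phi :: "'a \<Rightarrow> complex"
  assumes clin_phi: "clin smul phi" and faithful_phi: "faithful phi"
begin

lemma eq_if_phi_mult_left_eq: assumes "\<And>k. phi (k * P) = phi (k * Q)" shows "P = Q"
proof -
  have "\<forall>b. phi (b * (P - Q)) = 0"
    using assms by (simp add: right_diff_distrib clin_diff[OF clin_phi])
  then show ?thesis using faithful_phi unfolding faithful_def by auto
qed

lemma eq_if_phi_mult_right_eq: assumes "\<And>k. phi (P * k) = phi (Q * k)" shows "P = Q"
proof -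
  have "\<forall>b. phi ((P - Q) * b) = 0"
    using assms by (simp add: left_diff_distrib clin_diff[OF clin_phi])
  then show ?thesis using faithful_phi unfolding faithful_def by auto
qed

lemma eq_if_clin_eq: assumes "\<And>h. clin smul h \<Longrightarrow> h P = h Q" shows "P = Q"
  by (rule eq_if_phi_mult_left_eq) (rule assms[OF clin_mult_left[OF clin_phi]])

lemma tensor_eq_rmul1_cancel: assumes "\<And>w. tensor_eq (rmul1 w X) (rmul1 w Y)" shows "tensor_eq X Y"
  unfolding tensor_eq_def
proof (intro allI impI)
  fix f g assume f: "clin smul f" and g: "clin smul g"
  have "slice2 smul g X = slice2 smul g Y"
  proof (rule eq_if_mult_right_eq, rule eq_if_clin_eq)
    fix h w assume h: "clin smul h"
    show "h (slice2 smul g X * w) = h (slice2 smul g Y * w)"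
      using tensor_eqD[OF assms h g, of w] by (simp add: clin_slice2[OF clin_mult_right[OF h]])
  qed
  then show "tensor_eval X f g = tensor_eval Y f g" by (simp add: clin_slice2[OF f, symmetric])
qed

lemma tensor_eq_rmul2_cancel: assumes "\<And>w. tensor_eq (rmul2 w X) (rmul2 w Y)" shows "tensor_eq X Y"
  unfolding tensor_eq_def
proof (intro allI impI)
  fix f g assume f: "clin smul f" and g: "clin smul g"
  have "slice1 smul f X = slice1 smul f Y"
  proof (rule eq_if_mult_right_eq, rule eq_if_clin_eq)
    fix h w assume h: "clin smul h"
    show "h (slice1 smul f X * w) = h (slice1 smul f Y * w)"
      using tensor_eqD[OF assms f h, of w] by (simp add: clin_slice1[OF clin_mult_right[OF h]])
  qed
  then show "tensor_eval X f g = tensor_eval Y f g" by (simp add: clin_slice1[OF g, symmetric])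
qed

lemma tensor_eq_rmul_both_cancel:
  assumes "\<And>w1 w2. tensor_eq (rmul_both w1 w2 X) (rmul_both w1 w2 Y)" shows "tensor_eq X Y"
  by (rule tensor_eq_rmul2_cancel, rule tensor_eq_rmul1_cancel)
    (use assms in \<open>simp add: rmul_both_eq_rmul1_rmul2\<close>)

lemma tensor_eq_by_tests:
  assumes "\<And>w1 w2. tensor_eq (rmul_both w1 w2 X) (Z w1 w2)"
    and "\<And>w1 w2. tensor_eq (rmul_both w1 w2 Y) (Z w1 w2)"
  shows "tensor_eq X Y"
  using assms by (meson tensor_eq_rmul_both_cancel tensor_eq_sym tensor_eq_trans)

lemma tensor_eq_by_phi:
  assumes "\<And>k m. tensor_eval X (\<lambda>x. phi (k * x)) (\<lambda>y. phi (y * m)) =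
                 tensor_eval Y (\<lambda>x. phi (k * x)) (\<lambda>y. phi (y * m))"
  shows "tensor_eq X Y"
  unfolding tensor_eq_def
proof (intro allI impI)
  fix f g assume f: "clin smul f" and g: "clin smul g"
  have slice2_eq: "slice2 smul (\<lambda>y. phi (y * m)) X = slice2 smul (\<lambda>y. phi (y * m)) Y" for m
  proof (rule eq_if_phi_mult_left_eq)
    fix k
    show "phi (k * slice2 smul (\<lambda>y. phi (y * m)) X) = phi (k * slice2 smul (\<lambda>y. phi (y * m)) Y)"
      using assms[of k m] by (simp add: clin_slice2[OF clin_mult_left[OF clin_phi]])
  qed
  have "slice1 smul f X = slice1 smul f Y"
  proof (rule eq_if_phi_mult_right_eq)
    fix m
    have "phi (slice1 smul f Z * m) = f (slice2 smul (\<lambda>y. phi (y * m)) Z)" for Z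
      by (simp add: clin_slice1[OF clin_mult_right[OF clin_phi]] clin_slice2[OF f])
    then show "phi (slice1 smul f X * m) = phi (slice1 smul f Y * m)" by (simp add: slice2_eq)
  qed
  then show "tensor_eval X f g = tensor_eval Y f g" by (simp add: clin_slice1[OF g, symmetric])
qed

lemma slice1_tensor_eq: "tensor_eq t t' \<Longrightarrow> clin smul f \<Longrightarrow> slice1 smul f t = slice1 smul f t'"
  by (rule eq_if_clin_eq) (simp add: clin_slice1 tensor_eq_def)

lemma tensor3_eval_rmul3_cancel:
  assumes "clin smul f3"
    and "\<And>h z. clin smul h \<Longrightarrow> tensor3_eval L f1 f2 (\<lambda>v. h (v * z)) = tensor3_eval R f1 f2 (\<lambda>v. h (v * z))"
  shows "tensor3_eval L f1 f2 f3 = tensor3_eval R f1 f2 f3"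
proof -
  let ?slice = "\<lambda>L. sum_list (map (\<lambda>(x, y, z). smul (f1 x * f2 y) z) L)"
  have "?slice L = ?slice R"
  proof (rule eq_if_mult_right_eq, rule eq_if_clin_eq)
    fix h w assume h: "clin smul h"
    show "h (?slice L * w) = h (?slice R * w)"
      using assms(2)[OF h, of w] clin_slice3[OF clin_mult_right[OF h, of w], of f1 f2] by simp
  qed
  then show ?thesis using clin_slice3[OF assms(1), of f1 f2] by metis
qed

text \<open>Rotating the legs moves each of them in turn into the third position.\<close>

lemma tensor3_eval_rmul_cancel:
  assumes f: "clin smul f1" "clin smul f2" "clin smul f3"
    and tests: "\<And>f1 f2 f3 x y z. clin smul f1 \<Longrightarrow> clin smul f2 \<Longrightarrow> clin smul f3 \<Longrightarrow>
       tensor3_eval L (\<lambda>u. f1 (u * x)) (\<lambda>u. f2 (u * y)) (\<lambda>u. f3 (u * z)) =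
       tensor3_eval R (\<lambda>u. f1 (u * x)) (\<lambda>u. f2 (u * y)) (\<lambda>u. f3 (u * z))"
  shows "tensor3_eval L f1 f2 f3 = tensor3_eval R f1 f2 f3"
proof -
  have two: "tensor3_eval L (\<lambda>u. h1 (u * x)) (\<lambda>u. h2 (u * y)) f3 =
             tensor3_eval R (\<lambda>u. h1 (u * x)) (\<lambda>u. h2 (u * y)) f3"
    if "clin smul h1" "clin smul h2" for h1 h2 x y
    by (rule tensor3_eval_rmul3_cancel[OF f(3)]) (rule tests[OF that])
  have one: "tensor3_eval L (\<lambda>u. h1 (u * x)) f2 f3 = tensor3_eval R (\<lambda>u. h1 (u * x)) f2 f3"
    if "clin smul h1" for h1 x
  proof -
    have "tensor3_eval (rotate3 (rotate3 L)) f3 (\<lambda>u. h1 (u * x)) f2 =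
          tensor3_eval (rotate3 (rotate3 R)) f3 (\<lambda>u. h1 (u * x)) f2"
      by (rule tensor3_eval_rmul3_cancel[OF f(2)]) (simp add: tensor3_eval_rotate3 two[OF that])
    then show ?thesis by (simp add: tensor3_eval_rotate3)
  qed
  have "tensor3_eval (rotate3 L) f2 f3 f1 = tensor3_eval (rotate3 R) f2 f3 f1"
    by (rule tensor3_eval_rmul3_cancel[OF f(1)]) (simp add: tensor3_eval_rotate3 one)
  then show ?thesis by (simp add: tensor3_eval_rotate3)
qed

end

section \<open>Regular comultiplications\<close>

locale regular_comultiplication = faithful_algebra +
  fixes Delta :: "'a \<Rightarrow> 'a t2 mult"
  assumes regular_comult: "regular_comult smul Delta"
begin

definition Delta_mult :: "'a \<Rightarrow> 'a \<Rightarrow> 'a \<Rightarrow> 'a t2" where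
  "Delta_mult a w1 w2 = fst (Delta a) [(w1, w2)]"

text \<open>Chosen representatives of \<open>\<Delta>(a)(1 \<otimes> b)\<close>, \<open>(a \<otimes> 1)\<Delta>(b)\<close>, \<open>\<Delta>(a)(b \<otimes> 1)\<close> and
  \<open>(1 \<otimes> a)\<Delta>(b)\<close> in \<open>A \<otimes> A\<close>.\<close>

definition Delta_rone :: "'a \<Rightarrow> 'a \<Rightarrow> 'a t2" where
  "Delta_rone a b = (SOME t. inAA smul (mmul (Delta a) (rone b)) t)"
definition lone_Delta :: "'a \<Rightarrow> 'a \<Rightarrow> 'a t2" where
  "lone_Delta a b = (SOME t. inAA smul (mmul (lone a) (Delta b)) t)"
definition Delta_lone :: "'a \<Rightarrow> 'a \<Rightarrow> 'a t2" where
  "Delta_lone a b = (SOME t. inAA smul (mmul (Delta a) (lone b)) t)"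
definition rone_Delta :: "'a \<Rightarrow> 'a \<Rightarrow> 'a t2" where
  "rone_Delta a b = (SOME t. inAA smul (mmul (rone a) (Delta b)) t)"

lemma Delta_rone_inAA: "inAA smul (mmul (Delta a) (rone b)) (Delta_rone a b)"
  unfolding Delta_rone_def by (rule someI_ex) (use regular_comult in \<open>simp add: regular_comult_def\<close>)
lemma lone_Delta_inAA: "inAA smul (mmul (lone a) (Delta b)) (lone_Delta a b)"
  unfolding lone_Delta_def by (rule someI_ex) (use regular_comult in \<open>simp add: regular_comult_def\<close>)
lemma Delta_lone_inAA: "inAA smul (mmul (Delta a) (lone b)) (Delta_lone a b)"
  unfolding Delta_lone_def by (rule someI_ex) (use regular_comult in \<open>simp add: regular_comult_def\<close>)
lemma rone_Delta_inAA: "inAA smul (mmul (rone a) (Delta b)) (rone_Delta a b)"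
  unfolding rone_Delta_def by (rule someI_ex) (use regular_comult in \<open>simp add: regular_comult_def\<close>)

lemma inAA_test: assumes "inAA smul m t" shows "tensor_eq (rmul_both w1 w2 t) (fst m [(w1, w2)])"
proof -
  have "teq2 smul (fst m [(w1, w2)]) (rmul_both w1 w2 t)"
    using assms unfolding inM_def meq_def memb_def by (metis fst_conv tmul2_single)
  then show ?thesis by (rule tensor_eq_sym[OF teq2_imp_tensor_eq])
qed

lemma inAA_tensor_eq: "inAA smul m t \<Longrightarrow> inAA smul m t' \<Longrightarrow> tensor_eq t t'"
  by (rule tensor_eq_by_tests[OF inAA_test inAA_test])

lemma Delta_rone_test: "tensor_eq (rmul_both w1 w2 (Delta_rone a b)) (Delta_mult a w1 (b * w2))"
  using inAA_test[OF Delta_rone_inAA[of a b], of w1 w2]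
  by (simp add: mmul_def rone_def Delta_mult_def)
lemma lone_Delta_test: "tensor_eq (rmul_both w1 w2 (lone_Delta g a)) (lmul1 g (Delta_mult a w1 w2))"
  using inAA_test[OF lone_Delta_inAA[of g a], of w1 w2]
  by (simp add: mmul_def lone_def Delta_mult_def lmul1_def)
lemma Delta_lone_test: "tensor_eq (rmul_both w1 w2 (Delta_lone a b)) (Delta_mult a (b * w1) w2)"
  using inAA_test[OF Delta_lone_inAA[of a b], of w1 w2]
  by (simp add: mmul_def lone_def Delta_mult_def)
lemma rone_Delta_test: "tensor_eq (rmul_both w1 w2 (rone_Delta b a)) (lmul2 b (Delta_mult a w1 w2))"
  using inAA_test[OF rone_Delta_inAA[of b a], of w1 w2]
  by (simp add: mmul_def rone_def Delta_mult_def lmul2_def)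

lemma clin_Delta_mult_eval:
  assumes f: "clin smul f" and g: "clin smul g"
  shows "clin smul (\<lambda>a. tensor_eval (Delta_mult a w1 w2) f g)"
proof -
  have "meq (teq2 smul) (Delta (a + a')) (madd (Delta a) (Delta a'))"
    and "meq (teq2 smul) (Delta (smul c a)) (msc2 smul c (Delta a))" for a a' c
    using regular_comult by (simp_all add: regular_comult_def)
  then have add: "teq2 smul (Delta_mult (a + a') w1 w2) (Delta_mult a w1 w2 @ Delta_mult a' w1 w2)"
    and scale: "teq2 smul (Delta_mult (smul c a) w1 w2) (tensor_scale c (Delta_mult a w1 w2))" for a a' c
    by (simp_all add: meq_def madd_def msc2_def tensor_scale_def Delta_mult_def)
  show ?thesis
    unfolding clin_def
    using tensor_eqD[OF teq2_imp_tensor_eq[OF add] f g] tensor_eqD[OF teq2_imp_tensor_eq[OF scale] f g]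
    by (simp add: tensor_eval_tensor_scale[OF f])
qed

lemma clin_eval_by_tests:
  assumes tests: "\<And>a w1 w2. tensor_eq (rmul_both w1 w2 (X a)) (Z a w1 w2)"
    and clin_tests: "\<And>f g w1 w2. clin smul f \<Longrightarrow> clin smul g \<Longrightarrow> clin smul (\<lambda>a. tensor_eval (Z a w1 w2) f g)"
    and f: "clin smul f" and g: "clin smul g"
  shows "clin smul (\<lambda>a. tensor_eval (X a) f g)"
proof -
  have add: "tensor_eq (X (a + a')) (X a @ X a')" for a a'
  proof (rule tensor_eq_rmul_both_cancel, unfold tensor_eq_def, intro allI impI)
    fix w1 w2 f' g' assume fg: "clin smul f'" "clin smul g'"
    show "tensor_eval (rmul_both w1 w2 (X (a + a'))) f' g' = tensor_eval (rmul_both w1 w2 (X a @ X a')) f' g'"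
      using clin_add[OF clin_tests[OF fg], of a a' w1 w2]
      by (simp add: tensor_eqD[OF tests fg] del: tensor_eval_rmul_both)
  qed
  have scale: "tensor_eq (X (smul c a)) (tensor_scale c (X a))" for c a
  proof (rule tensor_eq_rmul_both_cancel, unfold tensor_eq_def, intro allI impI)
    fix w1 w2 f' g' assume fg: "clin smul f'" "clin smul g'"
    show "tensor_eval (rmul_both w1 w2 (X (smul c a))) f' g' =
        tensor_eval (rmul_both w1 w2 (tensor_scale c (X a))) f' g'"
      using clin_smul[OF clin_tests[OF fg], of c a w1 w2]
      by (simp add: tensor_eqD[OF tests fg] tensor_eval_tensor_scale[OF fg(1)] del: tensor_eval_rmul_both)
  qed
  show ?thesis
    unfolding clin_def using tensor_eqD[OF add f g] tensor_eqD[OF scale f g]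
    by (simp add: tensor_eval_tensor_scale[OF f])
qed

lemma clin_Delta_rone_eval: "clin smul f \<Longrightarrow> clin smul g \<Longrightarrow> clin smul (\<lambda>a. tensor_eval (Delta_rone a b) f g)"
  by (rule clin_eval_by_tests[OF Delta_rone_test clin_Delta_mult_eval])
lemma clin_lone_Delta_eval: "clin smul f \<Longrightarrow> clin smul g \<Longrightarrow> clin smul (\<lambda>a. tensor_eval (lone_Delta k a) f g)"
  by (rule clin_eval_by_tests[OF lone_Delta_test]) (simp add: clin_Delta_mult_eval clin_mult_left)
lemma clin_rone_Delta_eval: "clin smul f \<Longrightarrow> clin smul g \<Longrightarrow> clin smul (\<lambda>a. tensor_eval (rone_Delta a b) f g)"
proof (rule clin_eval_by_tests[OF rone_Delta_test])
  fix f g w1 w2 assume "clin smul g"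
  then show "clin smul (\<lambda>a. tensor_eval (lmul2 a (Delta_mult b w1 w2)) f g)"
    unfolding clin_def
    by (simp add: distrib_right tensor_eval_add_right smul_mult_left[symmetric] tensor_eval_scale_right)
qed

lemma lone_Delta_rmul2: "tensor_eq (rmul2 v (lone_Delta g a)) (lmul1 g (Delta_rone a v))"
proof (rule tensor_eq_by_tests)
  fix w1 w2
  show "tensor_eq (rmul_both w1 w2 (rmul2 v (lone_Delta g a))) (lmul1 g (Delta_mult a w1 (v * w2)))"
    using lone_Delta_test[of w1 "v * w2" g a] by simp
  show "tensor_eq (rmul_both w1 w2 (lmul1 g (Delta_rone a v))) (lmul1 g (Delta_mult a w1 (v * w2)))"
    using tensor_eq_lmul1[OF Delta_rone_test] by simp
qed

lemma lmul1_rone_Delta: "tensor_eq (lmul1 k (rone_Delta x b)) (lmul2 x (lone_Delta k b))"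
proof (rule tensor_eq_by_tests)
  fix w1 w2
  show "tensor_eq (rmul_both w1 w2 (lmul1 k (rone_Delta x b))) (lmul2 x (lmul1 k (Delta_mult b w1 w2)))"
    using tensor_eq_lmul1[OF rone_Delta_test[of w1 w2 x b], of k] by (simp add: lmul1_lmul2_commute)
  show "tensor_eq (rmul_both w1 w2 (lmul2 x (lone_Delta k b))) (lmul2 x (lmul1 k (Delta_mult b w1 w2)))"
    using tensor_eq_lmul2[OF lone_Delta_test] by simp
qed

lemma Delta_rone_mult: "tensor_eq (Delta_rone a (b1 * b2)) (rmul2 b2 (Delta_rone a b1))"
proof (rule tensor_eq_by_tests)
  fix w1 w2
  show "tensor_eq (rmul_both w1 w2 (Delta_rone a (b1 * b2))) (Delta_mult a w1 (b1 * (b2 * w2)))"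
    using Delta_rone_test[of w1 w2 a "b1 * b2"] by (simp add: mult.assoc)
  show "tensor_eq (rmul_both w1 w2 (rmul2 b2 (Delta_rone a b1))) (Delta_mult a w1 (b1 * (b2 * w2)))"
    using Delta_rone_test[of w1 "b2 * w2" a b1] by simp
qed

lemma rone_Delta_rmul2: "tensor_eq (rmul2 c (rone_Delta a b)) (lmul2 a (Delta_rone b c))"
proof (rule tensor_eq_by_tests)
  fix w1 w2
  show "tensor_eq (rmul_both w1 w2 (rmul2 c (rone_Delta a b))) (lmul2 a (Delta_mult b w1 (c * w2)))"
    using rone_Delta_test[of w1 "c * w2" a b] by simp
  show "tensor_eq (rmul_both w1 w2 (lmul2 a (Delta_rone b c))) (lmul2 a (Delta_mult b w1 (c * w2)))"
    using tensor_eq_lmul2[OF Delta_rone_test] by simp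
qed

lemma Delta_lone_lmul2: "tensor_eq (lmul2 h (Delta_lone b a)) (rmul1 a (rone_Delta h b))"
proof (rule tensor_eq_by_tests)
  fix w1 w2
  show "tensor_eq (rmul_both w1 w2 (lmul2 h (Delta_lone b a))) (lmul2 h (Delta_mult b (a * w1) w2))"
    using tensor_eq_lmul2[OF Delta_lone_test] by simp
  show "tensor_eq (rmul_both w1 w2 (rmul1 a (rone_Delta h b))) (lmul2 h (Delta_mult b (a * w1) w2))"
    using rone_Delta_test[of "a * w1" w2 h b] by simp
qed

lemma Delta_lone_rmul2: "tensor_eq (rmul2 y (Delta_lone x m)) (rmul1 m (Delta_rone x y))"
proof (rule tensor_eq_by_tests)
  fix w1 w2
  show "tensor_eq (rmul_both w1 w2 (rmul2 y (Delta_lone x m))) (Delta_mult x (m * w1) (y * w2))"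
    using Delta_lone_test[of w1 "y * w2" x m] by simp
  show "tensor_eq (rmul_both w1 w2 (rmul1 m (Delta_rone x y))) (Delta_mult x (m * w1) (y * w2))"
    using Delta_rone_test[of "m * w1" w2 x y] by simp
qed

lemma lone_Delta_eval_rmul2:
  "clin smul f \<Longrightarrow> clin smul h \<Longrightarrow>
   tensor_eval (lone_Delta g a) f (\<lambda>y. h (y * v)) = tensor_eval (Delta_rone a v) (\<lambda>x. f (g * x)) h"
  using tensor_eqD[OF lone_Delta_rmul2] by simp

abbreviation phi_Delta_rone :: "'a \<Rightarrow> 'a \<Rightarrow> 'a" where
  "phi_Delta_rone a b \<equiv> slice2 smul phi (Delta_rone a b)"
abbreviation phi_rone_Delta :: "'a \<Rightarrow> 'a \<Rightarrow> 'a" where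
  "phi_rone_Delta a b \<equiv> slice2 smul phi (rone_Delta a b)"

lemma tensor3_eval_lone3_delta_id:
  "tensor3_eval (fst (mmul (lone3 g) (delta_id Delta t)) [(x, y, z)]) f1 f2 f3 =
   tensor_eval t (\<lambda>p. tensor_eval (lmul1 g (Delta_mult p x y)) f1 f2) (\<lambda>q. f3 (q * z))"
proof -
  let ?L = "concat (map (\<lambda>(p, q). map (\<lambda>(u, v). (u, v, q * z)) (Delta_mult p x y)) t)"
  have "fst (mmul (lone3 g) (delta_id Delta t)) [(x, y, z)] = map (\<lambda>(x, yz). (g * x, yz)) ?L"
    by (simp add: mmul_def lone3_def delta_id_def Delta_mult_def)
  moreover have "tensor3_eval ?L (\<lambda>x. f1 (g * x)) f2 f3 =
      tensor_eval t (\<lambda>p. tensor_eval (lmul1 g (Delta_mult p x y)) f1 f2) (\<lambda>q. f3 (q * z))"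
    by (induction t) (auto simp: tensor3_eval_extend_right)
  ultimately show ?thesis by (simp only: tensor3_eval_lmul1)
qed

lemma tensor3_eval_id_delta_rone3:
  "tensor3_eval (fst (mmul (id_delta Delta t) (rone3 b)) [(x, y, z)]) f1 f2 f3 =
   tensor_eval t (\<lambda>r. f1 (r * x)) (\<lambda>s. tensor_eval (Delta_mult s y (b * z)) f2 f3)"
proof -
  have expand: "fst (mmul (id_delta Delta t) (rone3 b)) [(x, y, z)] =
      concat (map (\<lambda>(r, s). map (Pair (r * x)) (Delta_mult s y (b * z))) t)"
    by (simp add: mmul_def rone3_def id_delta_def Delta_mult_def)
  show ?thesis unfolding expand by (induction t) (auto simp: tensor3_eval_extend_left)
qed

lemma coassoc_tested:
  assumes f: "clin smul f1" "clin smul f2" "clin smul f3"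
  shows "tensor_eval (Delta_rone a b) (\<lambda>p. tensor_eval (lone_Delta g p) (\<lambda>u. f1 (u * x)) (\<lambda>v. f2 (v * y))) (\<lambda>q. f3 (q * z))
    = tensor_eval (lone_Delta g a) (\<lambda>r. f1 (r * x)) (\<lambda>s. tensor_eval (Delta_rone s b) (\<lambda>u. f2 (u * y)) (\<lambda>v. f3 (v * z)))"
proof -
  have "meq (teq3 smul) (mmul (lone3 g) (delta_id Delta (Delta_rone a b)))
      (mmul (id_delta Delta (lone_Delta g a)) (rone3 b))"
    using regular_comult Delta_rone_inAA[of a b] lone_Delta_inAA[of g a]
    unfolding regular_comult_def by blast
  then have "tensor3_eval (fst (mmul (lone3 g) (delta_id Delta (Delta_rone a b))) [(x, y, z)]) f1 f2 f3 =
      tensor3_eval (fst (mmul (id_delta Delta (lone_Delta g a)) (rone3 b)) [(x, y, z)]) f1 f2 f3"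
    using f unfolding meq_def teq3_def by (simp add: clin_slice3[OF f(3), symmetric])
  moreover have "tensor_eval (lmul1 g (Delta_mult p x y)) f1 f2 =
      tensor_eval (lone_Delta g p) (\<lambda>u. f1 (u * x)) (\<lambda>v. f2 (v * y))" for p
    using tensor_eqD[OF lone_Delta_test[of x y g p] f(1,2)] by simp
  moreover have "tensor_eval (Delta_mult s y (b * z)) f2 f3 =
      tensor_eval (Delta_rone s b) (\<lambda>u. f2 (u * y)) (\<lambda>v. f3 (v * z))" for s
    using tensor_eqD[OF Delta_rone_test[of y z s b] f(2,3)] by simp
  ultimately show ?thesis
    by (simp add: tensor3_eval_lone3_delta_id tensor3_eval_id_delta_rone3)
qed

lemma coassoc_eval:
  assumes f: "clin smul f1" "clin smul f2" "clin smul f3"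
  shows "tensor_eval (Delta_rone a b) (\<lambda>p. tensor_eval (lone_Delta g p) f1 f2) f3 =
         tensor_eval (lone_Delta g a) f1 (\<lambda>s. tensor_eval (Delta_rone s b) f2 f3)"
proof -
  have "tensor3_eval (nest_left (Delta_rone a b) (lone_Delta g)) f1 f2 f3 =
        tensor3_eval (nest_right (lone_Delta g a) (\<lambda>s. Delta_rone s b)) f1 f2 f3"
    by (rule tensor3_eval_rmul_cancel[OF f]) (simp add: coassoc_tested)
  then show ?thesis by simp
qed

lemma coassoc_eval_rone_Delta:
  assumes f: "clin smul f1" "clin smul f2" "clin smul f3"
  shows "tensor_eval (rone_Delta a b) (\<lambda>x. tensor_eval (lone_Delta k x) f1 f2) f3 =
         tensor_eval (lone_Delta k b) f1 (\<lambda>v. tensor_eval (rone_Delta a v) f2 f3)"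
proof -
  have "tensor3_eval (nest_left (rone_Delta a b) (lone_Delta k)) f1 f2 f3 =
        tensor3_eval (nest_right (lone_Delta k b) (rone_Delta a)) f1 f2 f3"
  proof (rule tensor3_eval_rmul3_cancel[OF f(3)])
    fix h z assume h: "clin smul h"
    have clin_inner: "clin smul (\<lambda>x. tensor_eval (lone_Delta k x) f1 f2)"
      by (rule clin_lone_Delta_eval[OF f(1,2)])
    have "tensor_eval (rone_Delta a b) (\<lambda>x. tensor_eval (lone_Delta k x) f1 f2) (\<lambda>v. h (v * z))
        = tensor_eval (rmul2 z (rone_Delta a b)) (\<lambda>x. tensor_eval (lone_Delta k x) f1 f2) h"
      by simp
    also have "\<dots> = tensor_eval (Delta_rone b z) (\<lambda>x. tensor_eval (lone_Delta k x) f1 f2) (\<lambda>q. h (a * q))"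
      using tensor_eqD[OF rone_Delta_rmul2 clin_inner h] by simp
    also have "\<dots> = tensor_eval (lone_Delta k b) f1 (\<lambda>s. tensor_eval (Delta_rone s z) f2 (\<lambda>q. h (a * q)))"
      by (rule coassoc_eval[OF f(1,2) clin_mult_left[OF h]])
    also have "\<dots> = tensor_eval (lone_Delta k b) f1 (\<lambda>s. tensor_eval (rone_Delta a s) f2 (\<lambda>v. h (v * z)))"
      using tensor_eqD[OF rone_Delta_rmul2[of z a] f(2) h] by simp
    finally show "tensor3_eval (nest_left (rone_Delta a b) (lone_Delta k)) f1 f2 (\<lambda>v. h (v * z)) =
        tensor3_eval (nest_right (lone_Delta k b) (rone_Delta a)) f1 f2 (\<lambda>v. h (v * z))"
      by simp
  qed
  then show ?thesis by simp
qed

end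

section \<open>Algebraic quantum hypergroups\<close>

lemma faithful_comp_anti_automorphism:
  fixes phi :: "'a::ring \<Rightarrow> complex"
  assumes "faithful phi" and "bij S"
    and anti_mult: "\<And>x y. S (x * y) = S y * S x" and additive: "\<And>x y. S (x + y) = S x + S y"
  shows "faithful (phi \<circ> S)"
proof -
  have "S 0 = 0" using additive[of 0 0] by simp
  then have S_eq_0: "S a = 0 \<Longrightarrow> a = 0" for a using \<open>bij S\<close> by (metis bij_def injD)
  have S_onto: "\<exists>b. b' = S b" for b' using \<open>bij S\<close> by (meson bij_def surjD)
  show ?thesis
    using \<open>faithful phi\<close> unfolding faithful_def comp_def anti_mult
    by (metis S_eq_0 S_onto)
qed

locale quantum_hypergroup = regular_comultiplication +
  fixes S :: "'a \<Rightarrow> 'a" and eps :: "'a \<Rightarrow> complex"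
  assumes counit: "counit smul Delta eps"
    and left_integral: "left_integral smul Delta phi"
    and antipode: "antipode smul Delta phi S"
begin

lemma antipode_add: "S (x + y) = S x + S y"
  using antipode by (simp add: antipode_def lin_map_def)
lemma antipode_smul: "S (smul c x) = smul c (S x)"
  using antipode by (simp add: antipode_def lin_map_def)
lemma antipode_mult: "S (x * y) = S y * S x"
  using antipode by (simp add: antipode_def)
lemma bij_antipode: "bij S"
  using antipode by (simp add: antipode_def)
lemma antipode_inject: "S x = S y \<Longrightarrow> x = y"
  using bij_antipode by (meson bij_def injD)

lemma clin_comp_antipode: "clin smul f \<Longrightarrow> clin smul (\<lambda>x. f (S x))"
  by (simp add: clin_def antipode_add antipode_smul)

lemma antipode_phi_Delta_rone: "S (phi_Delta_rone a b) = phi_rone_Delta a b"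
  using antipode Delta_rone_inAA[of a b] rone_Delta_inAA[of a b] unfolding antipode_def by blast

lemma antipode_eval_Delta_rone:
  assumes f: "clin smul f"
  shows "tensor_eval (Delta_rone a b) (\<lambda>x. f (S x)) phi = tensor_eval (rone_Delta a b) f phi"
proof -
  have "tensor_eval (Delta_rone a b) (\<lambda>x. f (S x)) phi = f (S (phi_Delta_rone a b))"
    by (rule clin_slice2[OF clin_comp_antipode[OF f], symmetric])
  then show ?thesis by (simp add: antipode_phi_Delta_rone clin_slice2[OF f])
qed

lemma left_invariance_Delta_lone: "slice2 smul phi (Delta_lone a c) = smul (phi a) c"
  using left_integral Delta_lone_inAA[of a c] unfolding left_integral_def by blast

lemma clin_counit: "clin smul eps"
  using counit by (simp add: counit_def)
lemma counit_mult: "eps (x * y) = eps x * eps y"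
  using counit by (simp add: counit_def)
lemma counit_slice2_lone_Delta: "slice2 smul eps (lone_Delta g a) = g * a"
  using counit lone_Delta_inAA[of g a] unfolding counit_def by blast
lemma counit_slice1_Delta_rone: "slice1 smul eps (Delta_rone a b) = a * b"
  using counit Delta_rone_inAA[of a b] unfolding counit_def by blast

lemma counit_nonzero: "\<exists>b. eps b \<noteq> 0"
proof (rule ccontr)
  assume "\<nexists>b. eps b \<noteq> 0"
  then have "slice1 smul eps t = 0" for t
    by (induction t) (auto simp: slice1_def split_def)
  then have "a * b = 0" for a b :: 'a
    by (metis counit_slice1_Delta_rone)
  then have "x = 0" for x :: 'a
    using mult_right_nondegenerate by blast
  then have "phi = (\<lambda>_. 0)"
    using clin_zero[OF clin_phi] by metis
  then show False
    using left_integral by (simp add: left_integral_def)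
qed

lemma counit_slice2_Delta_rone: "slice2 smul eps (Delta_rone a b) = smul (eps b) a"
proof (rule eq_if_mult_left_eq, rule eq_if_clin_eq)
  fix g and h :: "'a \<Rightarrow> complex" assume h: "clin smul h"
  have "h (g * slice2 smul eps (Delta_rone a b)) = tensor_eval (Delta_rone a b) (\<lambda>x. h (g * x)) eps"
    by (rule clin_slice2[OF clin_mult_left[OF h]])
  also have "\<dots> = tensor_eval (lone_Delta g a) h (\<lambda>y. eps b * eps y)"
    using lone_Delta_eval_rmul2[OF h clin_counit, of g a b] by (simp add: counit_mult mult.commute)
  also have "\<dots> = h (g * smul (eps b) a)"
    by (simp add: tensor_eval_scale_right clin_slice2[OF h, symmetric] counit_slice2_lone_Delta
        clin_smul[OF h] smul_mult_right[symmetric])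
  finally show "h (g * slice2 smul eps (Delta_rone a b)) = h (g * smul (eps b) a)" .
qed

text \<open>The elements \<open>(\<iota> \<otimes> \<phi>)(\<Delta>(a)(1 \<otimes> b))\<close> span \<open>A\<close>: a functional \<open>\<Lambda>\<close> vanishing on them
  kills \<open>(\<Lambda> \<otimes> \<iota>)(\<Delta>(x)(1 \<otimes> b))\<close> by faithfulness of \<open>\<phi>\<close>, and applying the counit to that
  element gives \<open>\<epsilon>(b) \<Lambda>(x)\<close>.\<close>

lemma phi_Delta_rone_spanning:
  assumes L: "clin smul Lam" and vanishes: "\<And>a b. Lam (phi_Delta_rone a b) = 0"
  shows "Lam x = 0"
proof -
  have slice_zero: "slice1 smul Lam (Delta_rone a b1) = 0" for a b1
  proof (rule eq_if_phi_mult_right_eq)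
    fix b2
    have "phi (slice1 smul Lam (Delta_rone a b1) * b2) = tensor_eval (Delta_rone a b1) Lam (\<lambda>y. phi (y * b2))"
      by (rule clin_slice1[OF clin_mult_right[OF clin_phi]])
    also have "\<dots> = tensor_eval (Delta_rone a (b1 * b2)) Lam phi"
      using tensor_eqD[OF Delta_rone_mult L clin_phi] by simp
    also have "\<dots> = Lam (phi_Delta_rone a (b1 * b2))"
      by (rule clin_slice2[OF L, symmetric])
    finally show "phi (slice1 smul Lam (Delta_rone a b1) * b2) = phi (0 * b2)"
      using vanishes clin_zero[OF clin_phi] by simp
  qed
  obtain b where b: "eps b \<noteq> 0" using counit_nonzero by blast
  have "eps b * Lam x = Lam (slice2 smul eps (Delta_rone x b))"
    by (simp add: counit_slice2_Delta_rone clin_smul[OF L])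
  also have "\<dots> = eps (slice1 smul Lam (Delta_rone x b))"
    by (simp add: clin_slice2[OF L] clin_slice1[OF clin_counit])
  also have "\<dots> = 0"
    by (simp add: slice_zero clin_zero[OF clin_counit])
  finally show ?thesis using b by simp
qed

lemma faithful_phi_antipode: "faithful (phi \<circ> S)"
  by (rule faithful_comp_anti_automorphism[OF faithful_phi bij_antipode antipode_mult antipode_add])

lemma clin_phi_antipode: "clin smul (phi \<circ> S)"
  unfolding comp_def by (rule clin_comp_antipode[OF clin_phi])

lemma tensor_eq_flip_map: "tensor_eq X Y \<Longrightarrow> tensor_eq (flip_map S X) (flip_map S Y)"
  by (simp add: tensor_eq_def clin_comp_antipode)

lemma flip_map_lmul1: "flip_map S (lmul1 g X) = rmul2 (S g) (flip_map S X)"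
  by (induction X) (auto simp: flip_map_def lmul1_def rmul2_def antipode_mult)
lemma flip_map_lmul2: "flip_map S (lmul2 g X) = rmul1 (S g) (flip_map S X)"
  by (induction X) (auto simp: flip_map_def lmul2_def rmul1_def antipode_mult)

lemma phi_slice_lone_Delta_mult:
  "phi (slice1 smul (\<lambda>x. phi (S x * m)) (lone_Delta g a) * v) =
   tensor_eval (rone_Delta a v) (\<lambda>x. phi (x * (S g * m))) phi"
proof -
  let ?f = "\<lambda>x. phi (S x * m)"
  have clin_f: "clin smul ?f" by (rule clin_comp_antipode[OF clin_mult_right[OF clin_phi]])
  have "phi (slice1 smul ?f (lone_Delta g a) * v) = tensor_eval (lone_Delta g a) ?f (\<lambda>s. phi (s * v))"
    by (rule clin_slice1[OF clin_mult_right[OF clin_phi]])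
  also have "\<dots> = ?f (g * phi_Delta_rone a v)"
    by (simp add: lone_Delta_eval_rmul2[OF clin_f clin_phi] clin_slice2[OF clin_mult_left[OF clin_f]])
  also have "\<dots> = tensor_eval (rone_Delta a v) (\<lambda>x. phi (x * (S g * m))) phi"
    by (simp add: antipode_mult antipode_phi_Delta_rone mult.assoc clin_slice2[OF clin_mult_right[OF clin_phi]])
  finally show ?thesis .
qed

lemma anti_comult_on_phi_Delta_rone:
  "tensor_eval (lone_Delta g (phi_Delta_rone a b)) (\<lambda>x. phi (S x * m)) (\<lambda>y. phi (k * S y)) =
   tensor_eval (Delta_rone (S (phi_Delta_rone a b)) (S g)) (\<lambda>x. phi (k * x)) (\<lambda>y. phi (y * m))"
proof -
  let ?f1 = "\<lambda>x. phi (S x * m)" and ?f2 = "\<lambda>y. phi (k * S y)" and ?phi_k = "\<lambda>x. phi (k * x)"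
  let ?X = "slice1 smul ?f1 (lone_Delta g a)"
  have clin_f1: "clin smul ?f1" by (rule clin_comp_antipode[OF clin_mult_right[OF clin_phi]])
  have clin_f2: "clin smul ?f2" by (rule clin_comp_antipode[OF clin_mult_left[OF clin_phi]])
  have clin_phi_k: "clin smul ?phi_k" by (rule clin_mult_left[OF clin_phi])
  have "tensor_eval (lone_Delta g (phi_Delta_rone a b)) ?f1 ?f2 =
      tensor_eval (Delta_rone a b) (\<lambda>p. tensor_eval (lone_Delta g p) ?f1 ?f2) phi"
    by (rule clin_slice2[OF clin_lone_Delta_eval[OF clin_f1 clin_f2]])
  also have "\<dots> = tensor_eval (lone_Delta g a) ?f1 (\<lambda>s. tensor_eval (Delta_rone s b) ?f2 phi)"
    by (rule coassoc_eval[OF clin_f1 clin_f2 clin_phi])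
  also have "\<dots> = tensor_eval (lone_Delta g a) ?f1 (\<lambda>s. tensor_eval (rone_Delta s b) ?phi_k phi)"
    by (simp add: antipode_eval_Delta_rone[OF clin_phi_k])
  also have "\<dots> = tensor_eval (rone_Delta ?X b) ?phi_k phi"
    by (rule clin_slice1[OF clin_rone_Delta_eval[OF clin_phi_k clin_phi], symmetric])
  also have "\<dots> = tensor_eval (lone_Delta k b) phi (\<lambda>v. phi (?X * v))"
    using tensor_eqD[OF lmul1_rone_Delta clin_phi clin_phi] by simp
  also have "\<dots> = tensor_eval (rone_Delta a b) (\<lambda>x. tensor_eval (lone_Delta k x) phi (\<lambda>q. phi (q * (S g * m)))) phi"
    unfolding phi_slice_lone_Delta_mult
    by (rule coassoc_eval_rone_Delta[OF clin_phi clin_mult_right[OF clin_phi] clin_phi, symmetric])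
  also have "\<dots> = tensor_eval (rone_Delta a b) (\<lambda>x. tensor_eval (Delta_rone x (S g)) ?phi_k (\<lambda>q. phi (q * m))) phi"
    using lone_Delta_eval_rmul2[OF clin_phi clin_mult_right[OF clin_phi]] by (simp add: mult.assoc)
  also have "\<dots> = tensor_eval (Delta_rone (phi_rone_Delta a b) (S g)) ?phi_k (\<lambda>y. phi (y * m))"
    by (rule clin_slice2[OF clin_Delta_rone_eval[OF clin_phi_k clin_mult_right[OF clin_phi]], symmetric])
  finally show ?thesis by (simp add: antipode_phi_Delta_rone)
qed

lemma antipode_anti_comult: "tensor_eq (flip_map S (lone_Delta g c)) (Delta_rone (S c) (S g))"
proof (rule tensor_eq_by_phi)
  fix k m
  let ?lhs = "\<lambda>c. tensor_eval (lone_Delta g c) (\<lambda>x. phi (S x * m)) (\<lambda>y. phi (k * S y))"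
  let ?rhs = "\<lambda>c. tensor_eval (Delta_rone (S c) (S g)) (\<lambda>x. phi (k * x)) (\<lambda>y. phi (y * m))"
  have clin_lhs_rhs: "clin smul (\<lambda>c. ?lhs c - ?rhs c)"
    by (rule clin_diff_fun[OF
          clin_lone_Delta_eval[OF clin_comp_antipode[OF clin_mult_right] clin_comp_antipode[OF clin_mult_left]]
          clin_comp_antipode[OF clin_Delta_rone_eval[OF clin_mult_left clin_mult_right]]])
      (rule clin_phi)+
  have "?lhs (phi_Delta_rone a b) - ?rhs (phi_Delta_rone a b) = 0" for a b
    by (simp add: anti_comult_on_phi_Delta_rone)
  then have "?lhs c - ?rhs c = 0"
    by (rule phi_Delta_rone_spanning[OF clin_lhs_rhs])
  then show "tensor_eval (flip_map S (lone_Delta g c)) (\<lambda>x. phi (k * x)) (\<lambda>y. phi (y * m)) = ?rhs c"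
    by simp
qed

lemma antipode_anti_comult_rone: "tensor_eq (flip_map S (rone_Delta k c)) (Delta_lone (S c) (S k))"
proof (rule tensor_eq_rmul2_cancel)
  fix y
  obtain g where y: "y = S g" using bij_antipode by (meson bij_def surjD)
  have "tensor_eq (flip_map S (lmul1 g (rone_Delta k c))) (flip_map S (lmul2 k (lone_Delta g c)))"
    by (rule tensor_eq_flip_map[OF lmul1_rone_Delta])
  then have "tensor_eq (rmul2 (S g) (flip_map S (rone_Delta k c))) (rmul1 (S k) (flip_map S (lone_Delta g c)))"
    by (simp add: flip_map_lmul1 flip_map_lmul2)
  also have "tensor_eq \<dots> (rmul1 (S k) (Delta_rone (S c) (S g)))"
    by (rule tensor_eq_rmul1[OF antipode_anti_comult])
  also have "tensor_eq \<dots> (rmul2 (S g) (Delta_lone (S c) (S k)))"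
    by (rule tensor_eq_sym[OF Delta_lone_rmul2])
  finally show "tensor_eq (rmul2 y (flip_map S (rone_Delta k c))) (rmul2 y (Delta_lone (S c) (S k)))"
    unfolding y .
qed

lemma right_invariance_rone_Delta: "slice1 smul (phi \<circ> S) (rone_Delta k c) = smul ((phi \<circ> S) c) k"
proof (rule antipode_inject, rule eq_if_clin_eq)
  fix h :: "'a \<Rightarrow> complex" assume h: "clin smul h"
  have "h (S (slice1 smul (phi \<circ> S) (rone_Delta k c))) = tensor_eval (flip_map S (rone_Delta k c)) h phi"
    by (simp add: clin_slice1[OF clin_comp_antipode[OF h]] comp_def)
  also have "\<dots> = tensor_eval (Delta_lone (S c) (S k)) h phi"
    by (rule tensor_eqD[OF antipode_anti_comult_rone h clin_phi])
  also have "\<dots> = h (S (smul ((phi \<circ> S) c) k))"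
    by (simp add: clin_slice2[OF h, symmetric] left_invariance_Delta_lone antipode_smul)
  finally show "h (S (slice1 smul (phi \<circ> S) (rone_Delta k c))) = h (S (smul ((phi \<circ> S) c) k))" .
qed

lemma right_invariance_Delta_rone: "slice1 smul (phi \<circ> S) (Delta_rone c k) = smul ((phi \<circ> S) c) k"
proof (rule eq_if_mult_left_eq, rule eq_if_clin_eq)
  fix g and h :: "'a \<Rightarrow> complex" assume h: "clin smul h"
  have "h (g * slice1 smul (phi \<circ> S) (Delta_rone c k)) = tensor_eval (lmul2 g (Delta_rone c k)) (phi \<circ> S) h"
    by (simp add: clin_slice1[OF clin_mult_left[OF h]])
  also have "\<dots> = tensor_eval (rmul2 k (rone_Delta g c)) (phi \<circ> S) h"
    by (rule tensor_eqD[OF tensor_eq_sym[OF rone_Delta_rmul2] clin_phi_antipode h])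
  also have "\<dots> = h (g * smul ((phi \<circ> S) c) k)"
    by (simp add: clin_slice1[OF clin_mult_right[OF h], symmetric] right_invariance_rone_Delta
        smul_mult_left[symmetric] smul_mult_right[symmetric])
  finally show "h (g * slice1 smul (phi \<circ> S) (Delta_rone c k)) = h (g * smul ((phi \<circ> S) c) k)" .
qed

lemma right_integral_phi_antipode: "right_integral smul Delta (phi \<circ> S)"
proof -
  have "phi \<circ> S \<noteq> (\<lambda>_. 0)"
  proof
    assume "phi \<circ> S = (\<lambda>_. 0)"
    then have "phi (S x) = 0" for x by (metis comp_apply)
    then have "phi y = 0" for y using bij_antipode by (metis bij_def surjD)
    then show False using left_integral by (auto simp: left_integral_def)
  qed
  moreover have "slice1 smul (phi \<circ> S) t = smul ((phi \<circ> S) a) c"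
    if "inAA smul (mmul (Delta a) (rone c)) t" for a c t
    using slice1_tensor_eq[OF inAA_tensor_eq[OF that Delta_rone_inAA] clin_phi_antipode]
    by (simp add: right_invariance_Delta_rone)
  moreover have "slice1 smul (phi \<circ> S) t = smul ((phi \<circ> S) a) c"
    if "inAA smul (mmul (rone c) (Delta a)) t" for a c t
    using slice1_tensor_eq[OF inAA_tensor_eq[OF that rone_Delta_inAA] clin_phi_antipode]
    by (simp add: right_invariance_rone_Delta)
  ultimately show ?thesis
    unfolding right_integral_def using clin_phi_antipode by blast
qed

lemma antipode_slice_lone_Delta: "S (slice1 smul (phi \<circ> S) (lone_Delta b a)) = phi_Delta_rone (S a) (S b)"
proof (rule eq_if_clin_eq)
  fix h :: "'a \<Rightarrow> complex" assume h: "clin smul h"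
  have "h (S (slice1 smul (phi \<circ> S) (lone_Delta b a))) = tensor_eval (flip_map S (lone_Delta b a)) h phi"
    by (simp add: clin_slice1[OF clin_comp_antipode[OF h]] comp_def)
  also have "\<dots> = tensor_eval (Delta_rone (S a) (S b)) h phi"
    by (rule tensor_eqD[OF antipode_anti_comult h clin_phi])
  also have "\<dots> = h (phi_Delta_rone (S a) (S b))"
    by (rule clin_slice2[OF h, symmetric])
  finally show "h (S (slice1 smul (phi \<circ> S) (lone_Delta b a))) = h (phi_Delta_rone (S a) (S b))" .
qed

lemma slice_Delta_lone: "slice1 smul (phi \<circ> S) (Delta_lone b a) = phi_Delta_rone (S a) (S b)"
proof (rule eq_if_mult_left_eq, rule antipode_inject, rule eq_if_clin_eq)
  fix h and q :: "'a \<Rightarrow> complex" assume q: "clin smul q"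
  have "q (S (h * slice1 smul (phi \<circ> S) (Delta_lone b a))) =
      tensor_eval (lmul2 h (Delta_lone b a)) (phi \<circ> S) (\<lambda>y. q (S y))"
    by (simp add: clin_slice1[OF clin_mult_left[OF clin_comp_antipode[OF q]]])
  also have "\<dots> = tensor_eval (rmul1 a (rone_Delta h b)) (phi \<circ> S) (\<lambda>y. q (S y))"
    by (rule tensor_eqD[OF Delta_lone_lmul2 clin_phi_antipode clin_comp_antipode[OF q]])
  also have "\<dots> = tensor_eval (flip_map S (rone_Delta h b)) q (\<lambda>z. phi (S a * z))"
    by (simp add: antipode_mult comp_def)
  also have "\<dots> = tensor_eval (lmul2 (S a) (Delta_lone (S b) (S h))) q phi"
    using tensor_eqD[OF antipode_anti_comult_rone q clin_mult_left[OF clin_phi]] by simp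
  also have "\<dots> = tensor_eval (rmul1 (S h) (rone_Delta (S a) (S b))) q phi"
    by (rule tensor_eqD[OF Delta_lone_lmul2 q clin_phi])
  also have "\<dots> = q (S (h * phi_Delta_rone (S a) (S b)))"
    by (simp add: clin_slice2[OF clin_mult_right[OF q], symmetric] antipode_mult antipode_phi_Delta_rone)
  finally show "q (S (h * slice1 smul (phi \<circ> S) (Delta_lone b a))) = q (S (h * phi_Delta_rone (S a) (S b)))" .
qed

lemma antipode_slice_phi_antipode:
  assumes t: "inAA smul (mmul (lone b) (Delta a)) t" and u: "inAA smul (mmul (Delta b) (lone a)) u"
  shows "S (slice1 smul (phi \<circ> S) t) = slice1 smul (phi \<circ> S) u"
proof -
  have "slice1 smul (phi \<circ> S) t = slice1 smul (phi \<circ> S) (lone_Delta b a)"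
    by (rule slice1_tensor_eq[OF inAA_tensor_eq[OF t lone_Delta_inAA] clin_phi_antipode])
  moreover have "slice1 smul (phi \<circ> S) u = slice1 smul (phi \<circ> S) (Delta_lone b a)"
    by (rule slice1_tensor_eq[OF inAA_tensor_eq[OF u Delta_lone_inAA] clin_phi_antipode])
  ultimately show ?thesis
    by (simp add: antipode_slice_lone_Delta slice_Delta_lone)
qed

end

theorem proposition2p2:
  fixes smul :: "complex \<Rightarrow> 'a::ring \<Rightarrow> 'a"
    and Delta :: "'a \<Rightarrow> 'a t2 mult"
    and phi :: "'a \<Rightarrow> complex"
    and S :: "'a \<Rightarrow> 'a"
  assumes "alg_quantum_hypergroup smul Delta phi S"
  shows "right_integral smul Delta (phi \<circ> S) \<and> faithful (phi \<circ> S) \<and>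
    (\<forall>a b t u. inAA smul (mmul (lone b) (Delta a)) t \<and> inAA smul (mmul (Delta b) (lone a)) u \<longrightarrow>
       S (slice1 smul (phi \<circ> S) t) = slice1 smul (phi \<circ> S) u)"
proof -
  from assms obtain eps where "calg smul" "regular_comult smul Delta" "counit smul Delta eps"
    "left_integral smul Delta phi" "faithful phi" "antipode smul Delta phi S"
    unfolding alg_quantum_hypergroup_def by blast
  moreover from \<open>left_integral smul Delta phi\<close> have "clin smul phi"
    by (simp add: left_integral_def)
  ultimately interpret quantum_hypergroup smul phi Delta S eps
    by unfold_locales
  show ?thesis
    using right_integral_phi_antipode faithful_phi_antipode antipode_slice_phi_antipode by blast
qed

end
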